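(* Let $n,m$ be integers with $2\le n\le m$ and $(n,m)\ne(2,4)$. Then $$\gamma^{LD}(K_n\square K_m)-1\le \gamma^{LD}(K_n\times K_m)\le \gamma^{LD}(K_n\square K_m).$$ Moreover, if $\gamma^{LD}(K_n\times K_m)=\gamma^{LD}(K_n\square K_m)-1$, then an optimal (minimum-cardinality) locating-dominating code $C$ in $K_n\times K_m$ has a non-codeword $v$ such that $I(K_n\times K_m, C;v)=C$.
   Context: $K_q$ is the complete graph on vertex set $\{1,\dots,q\}$. The Cartesian product $G_1\square G_2$ has vertex set $V_1\times V_2$, with $(u_1,u_2)$ adjacent to $(v_1,v_2)$ iff ($u_1=v_1$ and $u_2v_2\in E_2$) or ($u_2=v_2$ and $u_1v_1\in E_1$). The direct product $G_1\times G_2$ has vertex set $V_1\times V_2$, with $(u_1,u_2)$ adjacent to $(v_1,v_2)$ iff $u_1v_1\in E_1$ and $u_2v_2\in E_2$. For a graph $G$, a vertex $v$ and a code (nonempty vertex subset) $C$, $I(G,C;v)=N[v]\cap C$ where $N[v]$ is the closed neighbourhood in $G$. A code $C$ is locating-dominating in $G$ if for all distinct non-codewords $u,v$, $I(C;u)\ne\emptyset$ and $I(C;u)\ne I(C;v)$. $\gamma^{LD}(G)$ is the minimum size of a locating-dominating code in $G$. *)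

theory Defs
  imports Main
begin

text \<open>A (simple) graph is given by a vertex set V and a symmetric irreflexive
  adjacency relation adj.\<close>

definition closed_nbhd :: "'a set \<Rightarrow> ('a \<Rightarrow> 'a \<Rightarrow> bool) \<Rightarrow> 'a \<Rightarrow> 'a set" where
  "closed_nbhd V adj v = {u \<in> V. u = v \<or> adj v u}"

definition I_set :: "'a set \<Rightarrow> ('a \<Rightarrow> 'a \<Rightarrow> bool) \<Rightarrow> 'a set \<Rightarrow> 'a \<Rightarrow> 'a set" where
  "I_set V adj C v = closed_nbhd V adj v \<inter> C"

definition is_LD :: "'a set \<Rightarrow> ('a \<Rightarrow> 'a \<Rightarrow> bool) \<Rightarrow> 'a set \<Rightarrow> bool" where
  "is_LD V adj C \<longleftrightarrow> C \<subseteq> V \<and> C \<noteq> {} \<and>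
     (\<forall>u \<in> V - C. I_set V adj C u \<noteq> {}) \<and>
     (\<forall>u \<in> V - C. \<forall>v \<in> V - C. u \<noteq> v \<longrightarrow> I_set V adj C u \<noteq> I_set V adj C v)"

definition gamma_LD :: "'a set \<Rightarrow> ('a \<Rightarrow> 'a \<Rightarrow> bool) \<Rightarrow> nat" where
  "gamma_LD V adj = (LEAST k. \<exists>C. is_LD V adj C \<and> card C = k)"

definition KV :: "nat \<Rightarrow> nat \<Rightarrow> (nat \<times> nat) set" where
  "KV n m = {1..n} \<times> {1..m}"

definition cart_adj :: "nat \<times> nat \<Rightarrow> nat \<times> nat \<Rightarrow> bool" where
  "cart_adj u v \<longleftrightarrow> (fst u = fst v \<and> snd u \<noteq> snd v) \<or> (snd u = snd v \<and> fst u \<noteq> fst v)"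

definition direct_adj :: "nat \<times> nat \<Rightarrow> nat \<times> nat \<Rightarrow> bool" where
  "direct_adj u v \<longleftrightarrow> fst u \<noteq> fst v \<and> snd u \<noteq> snd v"

end

theory Submission imports Defs begin

text \<open>\<open>K\<^sub>n \<times> K\<^sub>m\<close> is the complement of \<open>K\<^sub>n \<box> K\<^sub>m\<close>, so for a non-codeword \<open>v\<close> the two
  traces of a code \<open>C\<close> are complementary within \<open>C\<close>: \<open>I\<^sub>\<times>(C; v) = C - I\<^sub>\<box>(C; v)\<close>. Hence \<open>C\<close> is
  locating-dominating in the direct product iff its Cartesian traces on non-codewords are pairwise
  distinct and none of them is all of \<open>C\<close>. An optimal direct code thus becomes Cartesian
  locating-dominating after adding the (unique) non-codeword with empty Cartesian trace, if any;
  this gives the lower bound, and when it is attained minimality forces such a non-codeword,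
  i.e.\ one whose direct trace is \<open>C\<close>.
  Conversely an optimal Cartesian code is direct locating-dominating unless some non-codeword \<open>v\<close>
  has Cartesian trace \<open>C\<close>. Then \<open>C\<close> lies in the cross of \<open>v\<close> and misses at most one of its
  \<open>n + m - 2\<close> cells, so \<open>|C| \<ge> n + m - 3\<close>, and explicit direct codes of size \<open>n + m - 3\<close>
  (\<open>n \<ge> 3\<close>), \<open>m - 1\<close> (\<open>n = 2\<close>, \<open>m \<ge> 5\<close>) and \<open>m\<close> (\<open>n = 2\<close>, \<open>m \<le> 3\<close>, where counting traces already
  gives \<open>m\<close> as a lower bound) give the upper bound.\<close>

section \<open>Traces and locating-dominating codes in an arbitrary graph\<close>

lemma mem_I_set_iff: "c \<in> I_set V adj C u \<longleftrightarrow> c \<in> V \<and> c \<in> C \<and> (c = u \<or> adj u c)"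
  by (auto simp: I_set_def closed_nbhd_def)

lemma I_set_subset: "I_set V adj C u \<subseteq> C"
  by (auto simp: I_set_def)

lemma is_LD_iff:
  "is_LD V adj C \<longleftrightarrow> C \<subseteq> V \<and> C \<noteq> {} \<and> (\<forall>u \<in> V - C. I_set V adj C u \<noteq> {})
     \<and> inj_on (I_set V adj C) (V - C)"
  unfolding is_LD_def inj_on_def by meson

lemma gamma_LD_le_card: "is_LD V adj C \<Longrightarrow> gamma_LD V adj \<le> card C"
  unfolding gamma_LD_def by (rule Least_le) blast

lemma gamma_LD_attained:
  assumes "V \<noteq> {}"
  obtains C where "is_LD V adj C" "card C = gamma_LD V adj"
proof -
  have "is_LD V adj V" using assms by (auto simp: is_LD_def)
  then have "\<exists>k C. is_LD V adj C \<and> card C = k" by blast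
  then have "\<exists>C. is_LD V adj C \<and> card C = gamma_LD V adj"
    unfolding gamma_LD_def by (rule LeastI_ex)
  then show thesis using that by blast
qed

lemma gamma_LD_pos:
  assumes "finite V" "V \<noteq> {}"
  shows "0 < gamma_LD V adj"
proof -
  obtain C where C: "is_LD V adj C" "card C = gamma_LD V adj"
    using gamma_LD_attained[OF assms(2)] .
  then have "finite C" "C \<noteq> {}" using assms(1) by (auto simp: is_LD_def intro: finite_subset)
  then show ?thesis using C(2) by auto
qed

lemma card_le_pow_gamma_LD:
  assumes "finite V" "V \<noteq> {}"
  shows "card V + 1 \<le> 2 ^ gamma_LD V adj + gamma_LD V adj"
proof -
  obtain C where LD: "is_LD V adj C" and card_C: "card C = gamma_LD V adj"
    using gamma_LD_attained[OF assms(2)] .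
  have CV: "C \<subseteq> V" and fin: "finite C" using LD assms(1) by (auto simp: is_LD_def intro: finite_subset)
  have "I_set V adj C ` (V - C) \<subseteq> Pow C - {{}}"
    using LD I_set_subset[of V adj C] by (auto simp: is_LD_iff)
  then have "card (V - C) \<le> card (Pow C - {{}})"
    using LD fin by (intro card_inj_on_le) (auto simp: is_LD_iff)
  also have "\<dots> = 2 ^ card C - 1"
    using fin by (simp add: card_Pow)
  finally have "card V - card C \<le> 2 ^ card C - 1"
    by (simp add: card_Diff_subset[OF fin CV])
  moreover have "card C \<le> card V" "1 \<le> (2::nat) ^ card C"
    using card_mono[OF assms(1) CV] by simp_all
  ultimately show ?thesis
    unfolding card_C[symmetric] by linarith
qed

section \<open>A graph and its complement\<close>

definition complement_adj :: "('a \<Rightarrow> 'a \<Rightarrow> bool) \<Rightarrow> 'a \<Rightarrow> 'a \<Rightarrow> bool" where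
  "complement_adj adj u v \<longleftrightarrow> u \<noteq> v \<and> \<not> adj u v"

lemma I_set_complement_adj:
  assumes "C \<subseteq> V" "v \<notin> C"
  shows "I_set V (complement_adj adj) C v = C - I_set V adj C v"
  using assms by (auto simp: mem_I_set_iff complement_adj_def)

lemma is_LD_complement_adj_iff:
  assumes "C \<subseteq> V" "C \<noteq> {}"
  shows "is_LD V (complement_adj adj) C \<longleftrightarrow>
    inj_on (I_set V adj C) (V - C) \<and> (\<forall>u \<in> V - C. I_set V adj C u \<noteq> C)"
proof -
  have Diff_cancel: "C - X = C - Y \<longleftrightarrow> X = Y" if "X \<subseteq> C" "Y \<subseteq> C" for X Y
    using that by blast
  have "inj_on (I_set V (complement_adj adj) C) (V - C) \<longleftrightarrow> inj_on (I_set V adj C) (V - C)"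
    using assms(1) by (simp add: inj_on_def I_set_complement_adj Diff_cancel I_set_subset)
  moreover have "I_set V (complement_adj adj) C u \<noteq> {} \<longleftrightarrow> I_set V adj C u \<noteq> C" if "u \<in> V - C" for u
    using that assms(1) I_set_subset[of V adj C u] by (auto simp: I_set_complement_adj)
  ultimately show ?thesis
    using assms by (auto simp: is_LD_iff)
qed

lemma is_LD_complement_adjI:
  assumes "is_LD V adj C" "\<forall>u \<in> V - C. I_set V adj C u \<noteq> C"
  shows "is_LD V (complement_adj adj) C"
proof -
  have "C \<subseteq> V" "C \<noteq> {}" "inj_on (I_set V adj C) (V - C)"
    using assms(1) by (auto simp: is_LD_iff)
  then show ?thesis using assms(2) by (simp add: is_LD_complement_adj_iff)
qed

lemma gamma_LD_complement_adj_le_card: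
  assumes "D \<subseteq> V" "D \<noteq> {}" "inj_on (I_set V adj D) (V - D)" "\<forall>u \<in> V - D. I_set V adj D u \<noteq> D"
  shows "gamma_LD V (complement_adj adj) \<le> card D"
  using assms by (intro gamma_LD_le_card) (simp add: is_LD_complement_adj_iff)

text \<open>By injectivity of the traces at most one non-codeword is undominated, so adding it
  to the code repairs domination.\<close>
lemma is_LD_insert_undominated:
  assumes inj: "inj_on (I_set V adj C) (V - C)" and "C \<subseteq> V" "C \<noteq> {}"
    and v: "v \<in> V - C" "I_set V adj C v = {}"
  shows "is_LD V adj (insert v C)"
proof -
  have restrict: "I_set V adj (insert v C) u \<inter> C = I_set V adj C u" for u
    using v by (auto simp: mem_I_set_iff)
  have "I_set V adj (insert v C) u \<noteq> {}" if "u \<in> V - insert v C" for u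
  proof -
    have "I_set V adj C u \<noteq> I_set V adj C v"
      using that v by (intro inj_on_contraD[OF inj]) auto
    then show ?thesis using v(2) restrict[of u] by auto
  qed
  moreover have "inj_on (I_set V adj (insert v C)) (V - insert v C)"
  proof (rule inj_onI)
    fix x y assume x: "x \<in> V - insert v C" and y: "y \<in> V - insert v C"
      and "I_set V adj (insert v C) x = I_set V adj (insert v C) y"
    then have "I_set V adj C x = I_set V adj C y" by (metis restrict)
    then show "x = y" using inj x y by (auto dest: inj_onD)
  qed
  ultimately show ?thesis
    using assms by (auto simp: is_LD_iff)
qed

lemma gamma_LD_le_complement_adj:
  assumes "finite V" "V \<noteq> {}"
  shows "gamma_LD V adj \<le> gamma_LD V (complement_adj adj) + 1"
proof -
  obtain C where LD: "is_LD V (complement_adj adj) C"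
    and card_C: "card C = gamma_LD V (complement_adj adj)"
    using gamma_LD_attained[OF assms(2)] .
  have CV: "C \<subseteq> V" "C \<noteq> {}" and fin: "finite C"
    using LD assms(1) by (auto simp: is_LD_def intro: finite_subset)
  have inj: "inj_on (I_set V adj C) (V - C)"
    using LD is_LD_complement_adj_iff[OF CV] by blast
  show ?thesis
  proof (cases "\<exists>v \<in> V - C. I_set V adj C v = {}")
    case True
    then obtain v where v: "v \<in> V - C" "I_set V adj C v = {}" by blast
    have "gamma_LD V adj \<le> card (insert v C)"
      by (rule gamma_LD_le_card[OF is_LD_insert_undominated[OF inj CV v]])
    with v fin card_C show ?thesis by simp
  next
    case False
    then have "is_LD V adj C" using CV inj by (auto simp: is_LD_iff)
    then show ?thesis using card_C gamma_LD_le_card by fastforce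
  qed
qed

lemma minimum_LD_complement_adj_has_full_trace:
  assumes less: "gamma_LD V (complement_adj adj) < gamma_LD V adj"
    and LD: "is_LD V (complement_adj adj) C" and card_C: "card C = gamma_LD V (complement_adj adj)"
  shows "\<exists>v \<in> V - C. I_set V (complement_adj adj) C v = C"
proof (rule ccontr)
  assume "\<not> ?thesis"
  moreover have CV: "C \<subseteq> V" "C \<noteq> {}" using LD by (auto simp: is_LD_def)
  ultimately have "\<forall>u \<in> V - C. I_set V adj C u \<noteq> {}"
    by (auto simp: I_set_complement_adj)
  then have "is_LD V adj C"
    using LD is_LD_complement_adj_iff[OF CV] CV by (auto simp: is_LD_iff)
  then show False using gamma_LD_le_card less card_C by fastforce
qed

section \<open>The Cartesian and the direct product of two complete graphs\<close>

lemma direct_adj_eq_complement_adj: "direct_adj = complement_adj cart_adj"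
  by (auto simp: fun_eq_iff direct_adj_def cart_adj_def complement_adj_def prod_eq_iff)

lemma mem_cart_trace_iff:
  "(x, y) \<in> I_set V cart_adj C (a, b) \<longleftrightarrow> (x, y) \<in> V \<and> (x, y) \<in> C \<and> (x = a \<or> y = b)"
  by (auto simp: mem_I_set_iff cart_adj_def)

lemma mem_KV_iff: "(x, y) \<in> KV n m \<longleftrightarrow> 1 \<le> x \<and> x \<le> n \<and> 1 \<le> y \<and> y \<le> m"
  by (simp add: KV_def)

lemma finite_KV: "finite (KV n m)"
  by (simp add: KV_def)

lemma card_KV: "card (KV n m) = n * m"
  by (simp add: KV_def card_cartesian_product)

lemma KV_nonempty: "1 \<le> n \<Longrightarrow> 1 \<le> m \<Longrightarrow> KV n m \<noteq> {}"
  by (auto simp: KV_def)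

lemma ex_other_in_atLeastAtMost: "2 \<le> (n::nat) \<Longrightarrow> \<exists>i \<in> {1..n}. i \<noteq> p"
  by (rule bexI[of _ "if p = 1 then 2 else 1"]) auto

definition cart_cross :: "nat \<Rightarrow> nat \<Rightarrow> nat \<Rightarrow> nat \<Rightarrow> (nat \<times> nat) set" where
  "cart_cross n m p q = {p} \<times> ({1..m} - {q}) \<union> ({1..n} - {p}) \<times> {q}"

lemma card_cart_cross:
  assumes "p \<in> {1..n}" "q \<in> {1..m}"
  shows "card (cart_cross n m p q) = (n - 1) + (m - 1)"
proof -
  have "card (cart_cross n m p q) = card ({p} \<times> ({1..m} - {q})) + card (({1..n} - {p}) \<times> {q})"
    unfolding cart_cross_def by (rule card_Un_disjoint) auto
  with assms show ?thesis by (simp add: card_cartesian_product)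
qed

lemma mem_full_cart_trace:
  assumes "I_set (KV n m) cart_adj C (p, q) = C" "(x, y) \<in> C"
  shows "(x, y) \<in> KV n m \<and> (x = p \<or> y = q)"
  using assms mem_cart_trace_iff[of x y "KV n m" C p q] by simp

lemma subset_cart_cross_if_full_trace:
  assumes "I_set (KV n m) cart_adj C (p, q) = C" "(p, q) \<notin> C"
  shows "C \<subseteq> cart_cross n m p q"
proof
  fix c assume "c \<in> C"
  with assms show "c \<in> cart_cross n m p q"
    by (cases c) (fastforce simp: cart_cross_def KV_def dest: mem_full_cart_trace)
qed

lemma cart_trace_off_cross:
  assumes full: "I_set (KV n m) cart_adj C (p, q) = C" and "i \<noteq> p" "j \<noteq> q"
  shows "I_set (KV n m) cart_adj C (i, j) = C \<inter> {(p, j), (i, q)}"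
proof (rule set_eqI)
  fix c :: "nat \<times> nat"
  obtain x y where c: "c = (x, y)" by fastforce
  show "c \<in> I_set (KV n m) cart_adj C (i, j) \<longleftrightarrow> c \<in> C \<inter> {(p, j), (i, q)}"
    using mem_full_cart_trace[OF full, of x y] assms(2,3)
    unfolding c mem_cart_trace_iff by auto
qed

text \<open>Two missing cells in the row of \<open>(p, q)\<close> would give two cells in another row with the
  same trace, similarly for the column, and a missing cell in each would give an undominated
  cell at the intersection of their column and row.\<close>
lemma card_cart_cross_Diff_le_1:
  assumes "2 \<le> n" "2 \<le> m" and LD: "is_LD (KV n m) cart_adj C"
    and v: "(p, q) \<notin> C" and full: "I_set (KV n m) cart_adj C (p, q) = C"
  shows "card (cart_cross n m p q - C) \<le> 1"
proof -
  let ?I = "I_set (KV n m) cart_adj C"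
  have dom: "?I u \<noteq> {}" and inj: "?I u = ?I w \<Longrightarrow> u = w"
    if "u \<in> KV n m - C" "w \<in> KV n m - C" for u w
    using LD that by (auto simp: is_LD_iff dest: inj_onD)
  obtain i0 where i0: "i0 \<in> {1..n}" "i0 \<noteq> p" using ex_other_in_atLeastAtMost[OF assms(1)] by blast
  obtain j0 where j0: "j0 \<in> {1..m}" "j0 \<noteq> q" using ex_other_in_atLeastAtMost[OF assms(2)] by blast
  have off_cross_nonword: "(i, j) \<in> KV n m - C" if "i \<in> {1..n}" "j \<in> {1..m}" "i \<noteq> p" "j \<noteq> q" for i j
    using that subset_cart_cross_if_full_trace[OF full v] by (auto simp: cart_cross_def KV_def)
  have row: "j1 = j2" if "(p, j1) \<in> cart_cross n m p q - C" "(p, j2) \<in> cart_cross n m p q - C" for j1 j2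
  proof -
    have "(i0, j1) \<in> KV n m - C" "(i0, j2) \<in> KV n m - C"
      using that i0 off_cross_nonword[of i0 j1] off_cross_nonword[of i0 j2] by (auto simp: cart_cross_def)
    moreover have "?I (i0, j1) = ?I (i0, j2)"
      using that i0 by (auto simp: cart_trace_off_cross[OF full] cart_cross_def)
    ultimately show ?thesis using inj by blast
  qed
  have column: "i1 = i2" if "(i1, q) \<in> cart_cross n m p q - C" "(i2, q) \<in> cart_cross n m p q - C" for i1 i2
  proof -
    have "(i1, j0) \<in> KV n m - C" "(i2, j0) \<in> KV n m - C"
      using that j0 off_cross_nonword[of i1 j0] off_cross_nonword[of i2 j0] by (auto simp: cart_cross_def)
    moreover have "?I (i1, j0) = ?I (i2, j0)"
      using that j0 by (auto simp: cart_trace_off_cross[OF full] cart_cross_def)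
    ultimately show ?thesis using inj by blast
  qed
  have False if "(p, j) \<in> cart_cross n m p q - C" "(i, q) \<in> cart_cross n m p q - C" for i j
  proof -
    have "(i, j) \<in> KV n m - C"
      using that off_cross_nonword[of i j] by (auto simp: cart_cross_def)
    moreover have "?I (i, j) = {}"
      using that by (auto simp: cart_trace_off_cross[OF full] cart_cross_def)
    ultimately show False using dom by blast
  qed
  with row column have "x = y" if "x \<in> cart_cross n m p q - C" "y \<in> cart_cross n m p q - C" for x y
    using that unfolding cart_cross_def by blast
  then show ?thesis
    by (simp add: card_le_Suc0_iff_eq cart_cross_def)
qed

lemma card_cart_LD_with_full_trace:
  assumes "2 \<le> n" "2 \<le> m" and LD: "is_LD (KV n m) cart_adj C"
    and v: "(p, q) \<in> KV n m - C" and full: "I_set (KV n m) cart_adj C (p, q) = C"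
  shows "n + m - 3 \<le> card C"
proof -
  have sub: "C \<subseteq> cart_cross n m p q"
    using subset_cart_cross_if_full_trace[OF full] v by blast
  have fin: "finite (cart_cross n m p q)" by (simp add: cart_cross_def)
  have "card (cart_cross n m p q) - card C \<le> 1"
    using card_cart_cross_Diff_le_1[OF assms(1,2) LD _ full] v
    by (simp add: card_Diff_subset[OF finite_subset[OF sub fin] sub])
  moreover have "card (cart_cross n m p q) = (n - 1) + (m - 1)"
    using v by (intro card_cart_cross) (auto simp: KV_def)
  ultimately show ?thesis using assms(1,2) by linarith
qed

lemma gamma_LD_direct_le_sum_minus_3:
  assumes "3 \<le> n" "n \<le> m"
  shows "gamma_LD (KV n m) direct_adj \<le> n + m - 3"
proof -
  define D where "D = ({1..n} - {2}) \<times> {1} \<union> {1} \<times> {2..<m}"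
  let ?I = "I_set (KV n m) cart_adj D"
  have D: "D \<subseteq> KV n m" "D \<noteq> {}" using assms by (auto simp: D_def KV_def)
  have nonword: "(a = 2 \<and> b = 1) \<or> (a = 1 \<and> b = m) \<or> (2 \<le> a \<and> a \<le> n \<and> 2 \<le> b \<and> b \<le> m)"
    if "(a, b) \<in> KV n m - D" for a b
    using that assms by (auto simp: D_def KV_def)
  have "\<forall>u \<in> KV n m - D. ?I u \<noteq> D"
  proof (intro ballI notI)
    fix u assume u: "u \<in> KV n m - D" and full: "?I u = D"
    obtain a b where ab: "u = (a, b)" by fastforce
    have "(1, 1) \<in> ?I u" "(1, 2) \<in> ?I u" "(3, 1) \<in> ?I u"
      unfolding full using assms by (auto simp: D_def)
    then have "u = (1, 1)" by (auto simp: ab mem_cart_trace_iff)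
    with u assms show False by (simp add: D_def)
  qed
  moreover have "inj_on ?I (KV n m - D)"
  proof (rule inj_onI)
    fix u w assume u: "u \<in> KV n m - D" and w: "w \<in> KV n m - D" and eq: "?I u = ?I w"
    obtain a b c d where ab: "u = (a, b)" and cd: "w = (c, d)" by fastforce
    have probe: "(x, y) \<in> ?I (a, b) \<longleftrightarrow> (x, y) \<in> ?I (c, d)" for x y
      using eq by (simp add: ab cd)
    \<comment> \<open>\<open>(a, 1)\<close> and \<open>(1, b)\<close> recover the row and the column of an interior non-codeword,
      \<open>(1, 1)\<close> and \<open>(3, 1)\<close> single out the exceptional ones \<open>(2, 1)\<close> and \<open>(1, m)\<close>\<close>
    have "a = c \<and> b = d"
      using nonword[OF u[unfolded ab]] nonword[OF w[unfolded cd]]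
        probe[of a 1] probe[of c 1] probe[of 1 b] probe[of 1 d] probe[of 1 1] probe[of 3 1] assms
      by (elim disjE conjE) (simp_all add: mem_cart_trace_iff D_def mem_KV_iff, presburger)
    then show "u = w" by (simp add: ab cd)
  qed
  ultimately have "gamma_LD (KV n m) direct_adj \<le> card D"
    unfolding direct_adj_eq_complement_adj using D by (intro gamma_LD_complement_adj_le_card)
  moreover have "card D = n + m - 3"
  proof -
    have "card D = card (({1..n} - {2}) \<times> {1::nat}) + card ({1::nat} \<times> {2..<m})"
      unfolding D_def by (rule card_Un_disjoint) auto
    then show ?thesis using assms by (simp add: card_cartesian_product)
  qed
  ultimately show ?thesis by simp
qed

lemma gamma_LD_direct_two_rows_le_pred:
  assumes "5 \<le> m"
  shows "gamma_LD (KV 2 m) direct_adj \<le> m - 1"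
proof -
  define D :: "(nat \<times> nat) set" where "D = {(1, 1), (1, 2)} \<union> {2} \<times> {3..<m}"
  let ?I = "I_set (KV 2 m) cart_adj D"
  have D: "D \<subseteq> KV 2 m" "D \<noteq> {}" using assms by (auto simp: D_def KV_def)
  have nonword: "(a = 1 \<and> 3 \<le> b \<and> b \<le> m) \<or> (a = 2 \<and> (b = 1 \<or> b = 2 \<or> b = m))"
    if "(a, b) \<in> KV 2 m - D" for a b
    using that by (auto simp: D_def KV_def)
  have "\<forall>u \<in> KV 2 m - D. ?I u \<noteq> D"
  proof (intro ballI notI)
    fix u assume full: "?I u = D"
    obtain a b where ab: "u = (a, b)" by fastforce
    have "(1, 1) \<in> ?I u" "(1, 2) \<in> ?I u" "(2, 3) \<in> ?I u" "(2, 4) \<in> ?I u"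
      unfolding full using assms by (auto simp: D_def)
    then show False by (auto simp: ab mem_cart_trace_iff)
  qed
  moreover have "inj_on ?I (KV 2 m - D)"
  proof (rule inj_onI)
    fix u w assume u: "u \<in> KV 2 m - D" and w: "w \<in> KV 2 m - D" and eq: "?I u = ?I w"
    obtain a b c d where ab: "u = (a, b)" and cd: "w = (c, d)" by fastforce
    have probe: "(x, y) \<in> ?I (a, b) \<longleftrightarrow> (x, y) \<in> ?I (c, d)" for x y
      using eq by (simp add: ab cd)
    have "a = c \<and> b = d"
      using nonword[OF u[unfolded ab]] nonword[OF w[unfolded cd]]
        probe[of 1 1] probe[of 1 2] probe[of 2 b] probe[of 2 d] assms
      by (elim disjE conjE) (simp_all add: mem_cart_trace_iff D_def mem_KV_iff, presburger)
    then show "u = w" by (simp add: ab cd)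
  qed
  ultimately have "gamma_LD (KV 2 m) direct_adj \<le> card D"
    unfolding direct_adj_eq_complement_adj using D by (intro gamma_LD_complement_adj_le_card)
  moreover have "card D = m - 1"
  proof -
    have "card D = card {(1::nat, 1::nat), (1, 2)} + card ({2::nat} \<times> {3..<m})"
      unfolding D_def by (rule card_Un_disjoint) auto
    then show ?thesis using assms by (simp add: card_cartesian_product)
  qed
  ultimately show ?thesis by simp
qed

lemma gamma_LD_direct_two_rows_le:
  assumes "2 \<le> m"
  shows "gamma_LD (KV 2 m) direct_adj \<le> m"
proof -
  define D :: "(nat \<times> nat) set" where "D = {1} \<times> {1..m}"
  let ?I = "I_set (KV 2 m) cart_adj D"
  have D: "D \<subseteq> KV 2 m" "D \<noteq> {}" using assms by (auto simp: D_def KV_def)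
  have "\<forall>u \<in> KV 2 m - D. ?I u \<noteq> D"
  proof (intro ballI notI)
    fix u assume u: "u \<in> KV 2 m - D" and full: "?I u = D"
    obtain a b where ab: "u = (a, b)" by fastforce
    have "(1, 1) \<in> ?I u" "(1, 2) \<in> ?I u"
      unfolding full using assms by (auto simp: D_def)
    then have "a = 1" by (auto simp: ab mem_cart_trace_iff)
    with u show False by (auto simp: ab D_def KV_def)
  qed
  moreover have "inj_on ?I (KV 2 m - D)"
  proof (rule inj_onI)
    fix u w assume u: "u \<in> KV 2 m - D" and w: "w \<in> KV 2 m - D" and eq: "?I u = ?I w"
    obtain a b c d where ab: "u = (a, b)" and cd: "w = (c, d)" by fastforce
    have "(1, b) \<in> ?I u \<longleftrightarrow> (1, b) \<in> ?I w" using eq by simp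
    then show "u = w"
      using u w by (auto simp: ab cd mem_cart_trace_iff D_def KV_def)
  qed
  ultimately have "gamma_LD (KV 2 m) direct_adj \<le> card D"
    unfolding direct_adj_eq_complement_adj using D by (intro gamma_LD_complement_adj_le_card)
  then show ?thesis by (simp add: D_def card_cartesian_product)
qed

lemma gamma_LD_two_rows_ge:
  assumes "1 \<le> m" "m \<le> 3"
  shows "m \<le> gamma_LD (KV 2 m) adj"
proof (rule ccontr)
  let ?g = "gamma_LD (KV 2 m) adj"
  assume less: "\<not> m \<le> ?g"
  have "2 * m + 1 \<le> 2 ^ ?g + ?g"
    using card_le_pow_gamma_LD[of "KV 2 m" adj] assms by (simp add: finite_KV KV_nonempty card_KV)
  moreover have "?g \<in> {0, 1, 2}" using less assms(2) by auto
  ultimately show False using less by auto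
qed

lemma gamma_LD_direct_le_cart:
  assumes "2 \<le> n" "n \<le> m" "(n, m) \<noteq> (2, 4)"
  shows "gamma_LD (KV n m) direct_adj \<le> gamma_LD (KV n m) cart_adj"
proof -
  let ?V = "KV n m" and ?gc = "gamma_LD (KV n m) cart_adj"
  have V: "finite ?V" "?V \<noteq> {}" using assms by (simp_all add: finite_KV KV_nonempty)
  obtain C where LD: "is_LD ?V cart_adj C" and card_C: "card C = ?gc"
    using gamma_LD_attained[OF V(2)] .
  show ?thesis
  proof (cases "\<exists>v \<in> ?V - C. I_set ?V cart_adj C v = C")
    case False
    then have "is_LD ?V direct_adj C"
      using LD by (simp add: direct_adj_eq_complement_adj is_LD_complement_adjI)
    then show ?thesis using card_C gamma_LD_le_card by metis
  next
    case True
    then obtain p q where "(p, q) \<in> ?V - C" "I_set ?V cart_adj C (p, q) = C" by auto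
    moreover have "2 \<le> m" using assms(1,2) by linarith
    ultimately have lower: "n + m - 3 \<le> ?gc"
      using card_cart_LD_with_full_trace[OF assms(1) _ LD] card_C by simp
    consider "3 \<le> n" | "n = 2" "5 \<le> m" | "n = 2" "m \<le> 3"
      using assms by fastforce
    then show ?thesis
    proof cases
      case 1
      then show ?thesis using gamma_LD_direct_le_sum_minus_3[OF 1 assms(2)] lower by linarith
    next
      case 2
      then show ?thesis using gamma_LD_direct_two_rows_le_pred[of m] lower by simp
    next
      case 3
      then have "m \<le> ?gc" using assms(1,2) gamma_LD_two_rows_ge[of m] by simp
      then show ?thesis using gamma_LD_direct_two_rows_le[of m] 3 assms by simp
    qed
  qed
qed

theorem lemma14:
  fixes n m :: nat
  assumes "2 \<le> n" and "n \<le> m" and "(n, m) \<noteq> (2, 4)"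
  shows "gamma_LD (KV n m) cart_adj - 1 \<le> gamma_LD (KV n m) direct_adj
       \<and> gamma_LD (KV n m) direct_adj \<le> gamma_LD (KV n m) cart_adj
       \<and> (gamma_LD (KV n m) direct_adj = gamma_LD (KV n m) cart_adj - 1 \<longrightarrow>
          (\<forall>C. is_LD (KV n m) direct_adj C \<and> card C = gamma_LD (KV n m) direct_adj \<longrightarrow>
             (\<exists>v \<in> KV n m - C. I_set (KV n m) direct_adj C v = C)))"
proof -
  let ?V = "KV n m"
  have V: "finite ?V" "?V \<noteq> {}" using assms by (simp_all add: finite_KV KV_nonempty)
  have "gamma_LD ?V cart_adj \<le> gamma_LD ?V direct_adj + 1"
    unfolding direct_adj_eq_complement_adj by (rule gamma_LD_le_complement_adj[OF V])
  moreover have "gamma_LD ?V direct_adj \<le> gamma_LD ?V cart_adj"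
    by (rule gamma_LD_direct_le_cart[OF assms])
  moreover have "\<exists>v \<in> ?V - C. I_set ?V direct_adj C v = C"
    if "gamma_LD ?V direct_adj = gamma_LD ?V cart_adj - 1"
      and "is_LD ?V direct_adj C" "card C = gamma_LD ?V direct_adj" for C
  proof -
    have "gamma_LD ?V direct_adj < gamma_LD ?V cart_adj"
      using that(1) gamma_LD_pos[OF V, of cart_adj] by linarith
    from this that(2,3) show ?thesis
      unfolding direct_adj_eq_complement_adj by (rule minimum_LD_complement_adj_has_full_trace)
  qed
  ultimately show ?thesis by auto
qed

end
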